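(* Let $S$ be a finite, additively commutative, congruence-simple semiring. Then either $(S,+)$ is a group (hence $(S,+,\cdot)$ is a ring), or $S$ has an additively absorbing element, i.e. an element $\alpha$ with $\alpha+x=x+\alpha=\alpha$ for all $x\in S$.
   Context: A semiring is a nonempty set $S$ with two associative binary operations $+$ and $\cdot$ satisfying both distributive laws $a(b+c)=ab+ac$ and $(a+b)c=ac+bc$; no identity elements are assumed. It is additively commutative if $(S,+)$ is commutative. A congruence relation on $S$ is an equivalence relation $\sim$ such that $x_1\sim x_2$ implies $c+x_1\sim c+x_2$, $x_1+c\sim x_2+c$, $cx_1\sim cx_2$, $x_1c\sim x_2c$ for all $c\in S$. $S$ is congruence-simple if its only congruence relations are the identity relation and $S\times S$. *)

theory Defs
  imports Main
begin

(* An additively commutative semiring without identities is exactly an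
   instance of the HOL type class 'semiring' (ab_semigroup_add + semigroup_mult
   + both distributive laws). *)

definition semiring_congruence :: "('a::semiring \<times> 'a) set \<Rightarrow> bool" where
  "semiring_congruence R \<longleftrightarrow> equiv UNIV R \<and>
     (\<forall>x1 x2 c. (x1, x2) \<in> R \<longrightarrow>
        (c + x1, c + x2) \<in> R \<and> (x1 + c, x2 + c) \<in> R \<and>
        (c * x1, c * x2) \<in> R \<and> (x1 * c, x2 * c) \<in> R)"

definition congruence_simple :: "'a::semiring itself \<Rightarrow> bool" where
  "congruence_simple _ \<longleftrightarrow>
     (\<forall>R::('a \<times> 'a) set. semiring_congruence R \<longrightarrow> R = Id \<or> R = UNIV)"

definition additive_group :: "'a::semiring itself \<Rightarrow> bool" where
  "additive_group _ \<longleftrightarrow>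
     (\<exists>z::'a. (\<forall>x. z + x = x \<and> x + z = x) \<and> (\<forall>x. \<exists>y. x + y = z \<and> y + x = z))"

end

theory Submission
  imports Defs
begin

text \<open>Identifying x and y whenever x + z = y + z for some z is a semiring congruence. By
  simplicity it is either the identity, so that (S,+) is cancellative and hence, being finite,
  a group; or it is all of S \<times> S, and then finiteness yields a single z with x + z = y + z
  for all x, y, which makes z + z additively absorbing.\<close>

definition add_cancel_rel :: "('a::ab_semigroup_add \<times> 'a) set" where
  "add_cancel_rel = {(x, y). \<exists>z. x + z = y + z}"

lemma add_cancel_relI: "x + z = y + z \<Longrightarrow> (x, y) \<in> add_cancel_rel"
  unfolding add_cancel_rel_def by blast

lemma add_cancel_relE:
  assumes "(x, y) \<in> add_cancel_rel"
  obtains z where "x + z = y + z"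
  using assms unfolding add_cancel_rel_def by blast

lemma equiv_add_cancel_rel: "equiv UNIV (add_cancel_rel :: ('a::ab_semigroup_add \<times> 'a) set)"
proof (rule equivI)
  show "refl (add_cancel_rel :: ('a \<times> 'a) set)"
    by (auto simp: refl_on_def intro: add_cancel_relI)
  show "sym (add_cancel_rel :: ('a \<times> 'a) set)"
    by (rule symI) (metis add_cancel_relE add_cancel_relI)
  show "trans (add_cancel_rel :: ('a \<times> 'a) set)"
  proof (rule transI)
    fix x y u :: 'a
    assume "(x, y) \<in> add_cancel_rel" "(y, u) \<in> add_cancel_rel"
    then obtain z z' where xy: "x + z = y + z" and yu: "y + z' = u + z'"
      by (auto elim!: add_cancel_relE)
    have "x + (z + z') = (x + z) + z'" by (simp add: add.assoc)
    also have "\<dots> = (y + z') + z" using xy by (simp add: add_ac)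
    also have "\<dots> = u + (z + z')" using yu by (simp add: add_ac)
    finally show "(x, u) \<in> add_cancel_rel" by (rule add_cancel_relI)
  qed
qed simp

lemma semiring_congruence_add_cancel_rel:
  "semiring_congruence (add_cancel_rel :: ('a::semiring \<times> 'a) set)"
  unfolding semiring_congruence_def
proof (intro conjI allI impI equiv_add_cancel_rel)
  fix x1 x2 c :: 'a
  assume "(x1, x2) \<in> add_cancel_rel"
  then obtain z where z: "x1 + z = x2 + z" by (rule add_cancel_relE)
  have "(c + x1) + z = (c + x2) + z" using z by (simp add: add.assoc)
  then show "(c + x1, c + x2) \<in> add_cancel_rel" by (rule add_cancel_relI)
  have "(x1 + c) + z = (x2 + c) + z" using z by (metis add.assoc add.commute)
  then show "(x1 + c, x2 + c) \<in> add_cancel_rel" by (rule add_cancel_relI)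
  have "c * x1 + c * z = c * x2 + c * z" using z by (metis distrib_left)
  then show "(c * x1, c * x2) \<in> add_cancel_rel" by (rule add_cancel_relI)
  have "x1 * c + z * c = x2 * c + z * c" using z by (metis distrib_right)
  then show "(x1 * c, x2 * c) \<in> add_cancel_rel" by (rule add_cancel_relI)
qed

text \<open>The witnesses of finitely many related pairs can be added up to a single witness.\<close>

lemma finite_add_cancel_rel_common_witness:
  fixes A :: "('a::ab_semigroup_add \<times> 'a) set"
  assumes "finite A" "A \<subseteq> add_cancel_rel"
  shows "\<exists>z. \<forall>(x, y) \<in> A. x + z = y + z"
  using assms
proof (induction A rule: finite_induct)
  case empty
  then show ?case by auto
next
  case (insert p A)
  then obtain z where z: "\<forall>(x, y) \<in> A. x + z = y + z" by auto
  obtain x y where p: "p = (x, y)" by (cases p)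
  with insert.prems obtain z' where z': "x + z' = y + z'" by (auto elim: add_cancel_relE)
  have "u + (z + z') = v + (z + z')" if "(u, v) \<in> insert p A" for u v
  proof (cases "(u, v) = p")
    case True
    then have "u + z' = v + z'" using p z' by simp
    then have "(u + z') + z = (v + z') + z" by simp
    then show ?thesis by (simp add: add_ac)
  next
    case False
    then have "u + z = v + z" using that z by auto
    then show ?thesis by (simp flip: add.assoc)
  qed
  then show ?case by blast
qed

lemma finite_add_cancel_rel_UNIV_absorbing:
  assumes "add_cancel_rel = (UNIV :: ('a::{ab_semigroup_add, finite} \<times> 'a) set)"
  shows "\<exists>\<alpha>::'a. \<forall>x. \<alpha> + x = \<alpha> \<and> x + \<alpha> = \<alpha>"
proof -
  obtain z :: 'a where z: "\<And>x y. x + z = y + z"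
    using finite_add_cancel_rel_common_witness[of "UNIV :: ('a \<times> 'a) set"] assms by auto
  have "(z + z) + x = z + z" for x
  proof -
    have "(z + z) + x = x + z + z" by (simp add: add_ac)
    also have "\<dots> = z + z" by (rule z)
    finally show ?thesis .
  qed
  then show ?thesis by (metis add.commute)
qed

lemma finite_cancellative_ab_semigroup_add_is_group:
  assumes cancel: "\<And>x y z :: 'a::{ab_semigroup_add, finite}. x + z = y + z \<Longrightarrow> x = y"
  shows "\<exists>e::'a. (\<forall>x. e + x = x \<and> x + e = x) \<and> (\<forall>x. \<exists>y. x + y = e \<and> y + x = e)"
proof -
  have surj_add: "surj ((+) x)" for x :: 'a
  proof -
    have "inj ((+) x)" by (rule injI) (metis cancel add.commute)
    then show ?thesis by (simp add: finite_UNIV_inj_surj)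
  qed
  fix a :: 'a
  obtain e where e: "a + e = a" using surj_add[of a] by (metis surjD)
  have neutral: "e + x = x" for x
  proof (rule cancel)
    have "(e + x) + a = x + (a + e)" by (simp add: add_ac)
    then show "(e + x) + a = x + a" using e by simp
  qed
  have "\<exists>y. x + y = e" for x using surj_add[of x] by (metis surjD)
  with neutral show ?thesis by (metis add.commute)
qed

theorem lemma2p2:
  assumes "congruence_simple TYPE('a::{semiring, finite})"
  shows "additive_group TYPE('a) \<or> (\<exists>\<alpha>::'a. \<forall>x. \<alpha> + x = \<alpha> \<and> x + \<alpha> = \<alpha>)"
proof -
  have "add_cancel_rel = (Id :: ('a \<times> 'a) set) \<or> add_cancel_rel = (UNIV :: ('a \<times> 'a) set)"
    using assms semiring_congruence_add_cancel_rel unfolding congruence_simple_def by blast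
  then show ?thesis
  proof
    assume "add_cancel_rel = (Id :: ('a \<times> 'a) set)"
    then have "x = y" if "x + z = y + z" for x y z :: 'a
      using add_cancel_relI[OF that] by simp
    then have "additive_group TYPE('a)"
      unfolding additive_group_def by (rule finite_cancellative_ab_semigroup_add_is_group)
    then show ?thesis ..
  next
    assume "add_cancel_rel = (UNIV :: ('a \<times> 'a) set)"
    then show ?thesis by (intro disjI2 finite_add_cancel_rel_UNIV_absorbing)
  qed
qed

end
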